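(* For all integers $d \geq 1$, $r \geq 2$ and $k > 2r(d-1)$, there exists a constant $C$ such that for all $n > k$, $$f(n,k,d,r) \leq n\,\frac{k-2r(d-1)}{r\,(k-(r+1)(d-1))} + C.$$ In particular, $f(n,k,d,2) \leq \frac{k-4d+4}{2(k-3d+3)}\,n + C$.
   Context: All graphs are finite, simple and undirected. The order of a graph is its number of vertices. For a graph $G$ and positive integers $d, r$, let $f_G(d,r)$ be the largest integer $t$ such that in every coloring of the edges of $G$ with $r$ colors there is a monochromatic subgraph (all of its edges of one color) with minimum degree at least $d$ and order at least $t$. For integers $n > k > d$, let $f(n,k,d,r)$ be the minimum of $f_G(d,r)$ over all graphs $G$ with $n$ vertices and minimum degree at least $k$. *)

theory Defs
  imports Complex_Main
begin

definition simple_graph :: "'a set \<Rightarrow> 'a set set \<Rightarrow> bool" where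
  "simple_graph V E \<longleftrightarrow> finite V \<and> (\<forall>e\<in>E. e \<subseteq> V \<and> card e = 2)"

definition degree :: "'a set set \<Rightarrow> 'a \<Rightarrow> nat" where
  "degree E v = card {e \<in> E. v \<in> e}"

definition min_degree_ge :: "'a set \<Rightarrow> 'a set set \<Rightarrow> nat \<Rightarrow> bool" where
  "min_degree_ge V E k \<longleftrightarrow> (\<forall>v\<in>V. degree E v \<ge> k)"

definition mono_subgraph ::
  "'a set \<Rightarrow> 'a set set \<Rightarrow> ('a set \<Rightarrow> nat) \<Rightarrow> nat \<Rightarrow> 'a set \<Rightarrow> 'a set set \<Rightarrow> bool" where
  "mono_subgraph V E c i W F \<longleftrightarrow> W \<subseteq> V \<and> F \<subseteq> E \<and> (\<forall>e\<in>F. e \<subseteq> W \<and> c e = i)"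

definition edge_colouring :: "'a set set \<Rightarrow> nat \<Rightarrow> ('a set \<Rightarrow> nat) \<Rightarrow> bool" where
  "edge_colouring E r c \<longleftrightarrow> (\<forall>e\<in>E. c e < r)"

definition fG :: "'a set \<Rightarrow> 'a set set \<Rightarrow> nat \<Rightarrow> nat \<Rightarrow> nat" where
  "fG V E d r = (GREATEST t. \<forall>c. edge_colouring E r c \<longrightarrow>
      (\<exists>i W F. mono_subgraph V E c i W F \<and> min_degree_ge W F d \<and> card W \<ge> t))"

text \<open>f(n,k,d,r): minimum of f_G(d,r) over graphs with n vertices and minimum degree
  at least k (vertex set taken as {0..<n}, w.l.o.g. up to isomorphism).\<close>
definition f :: "nat \<Rightarrow> nat \<Rightarrow> nat \<Rightarrow> nat \<Rightarrow> nat" where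
  "f n k d r = Min {fG {0..<n} E d r | E. simple_graph {0..<n} E \<and> min_degree_ge {0..<n} E k}"

end

theory Submission
  imports Defs
begin

text \<open>
  The upper bound comes from an explicit graph on \<open>n\<close> vertices, with \<open>D = d - 1\<close> and
  \<open>k = 2rD + p\<close>. Its vertices split into a sparse part \<open>B\<close> and a core \<open>C\<close>; the core is cut
  into \<open>r\<close> classes, and class \<open>j\<close> is a clique of colour \<open>j\<close>. The part \<open>B\<close> is the \<open>rD\<close>-th
  power of a path, the edge from \<open>t\<close> to \<open>t + s\<close> having colour \<open>(s - 1) div D\<close>, so every
  vertex of \<open>B\<close> has at most \<open>D\<close> later neighbours in \<open>B\<close> of each colour. Every vertex of \<open>B\<close>
  has \<open>p\<close> further neighbours in \<open>C\<close>, joined in a colour different from their class, and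
  these edges are spread so that each core vertex meets at most \<open>D\<close> of them in each colour.

  List \<open>C\<close> first and then \<open>B\<close> from left to right. Every vertex outside class \<open>j\<close> then has
  at most \<open>D\<close> neighbours in colour \<open>j\<close> that lie in class \<open>j\<close> or later in the list, so
  peeling the vertices outside class \<open>j\<close> in this order shows that a subgraph of colour \<open>j\<close>
  and minimum degree \<open>D + 1\<close> lies inside class \<open>j\<close>. The edges between \<open>B\<close> and \<open>C\<close> balance
  when \<open>p |B| = (r - 1) D |C|\<close>, so a class has \<open>|C| / r = n p / (r(r - 1)D + rp)\<close> vertices
  up to a constant, and \<open>r(r - 1)D + rp = r (k - (r + 1)(d - 1))\<close>.
\<close>

section \<open>Monochromatic subgraphs and the function f\<close>

lemma card_le_degree:
  assumes "finite E" "finite A" "\<forall>u\<in>A. {u,v} \<in> E \<and> u \<noteq> v"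
  shows "card A \<le> degree E v"
proof -
  have "inj_on (\<lambda>u. {u,v}) A" using assms(3) by (auto simp: inj_on_def doubleton_eq_iff)
  then have "card A = card ((\<lambda>u. {u,v}) ` A)" by (simp add: card_image)
  also have "\<dots> \<le> card {e\<in>E. v \<in> e}" using assms by (intro card_mono) auto
  finally show ?thesis by (simp add: degree_def)
qed

lemma card_2_other_element: "card e = 2 \<Longrightarrow> v \<in> e \<Longrightarrow> \<exists>u. e = {u,v} \<and> u \<noteq> v"
  by (metis card_2_iff doubleton_eq_iff insert_iff singletonD)

lemma fG_le:
  assumes "edge_colouring E r c"
    and "\<And>i W F. mono_subgraph V E c i W F \<Longrightarrow> min_degree_ge W F d \<Longrightarrow> card W \<le> T"
  shows "fG V E d r \<le> T"
proof -
  let ?P = "\<lambda>t. \<forall>c. edge_colouring E r c \<longrightarrow>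
      (\<exists>i W F. mono_subgraph V E c i W F \<and> min_degree_ge W F d \<and> card W \<ge> t)"
  have bounded: "t \<le> T" if P: "?P t" for t
  proof -
    obtain i W F where "mono_subgraph V E c i W F" "min_degree_ge W F d" "card W \<ge> t"
      using P assms(1) by blast
    then show ?thesis using assms(2) by fastforce
  qed
  have "?P 0" by (auto simp: mono_subgraph_def min_degree_ge_def intro!: exI[of _ "{}"])
  then have "?P (Greatest ?P)" by (rule GreatestI_nat) (use bounded in blast)
  then show ?thesis unfolding fG_def by (rule bounded)
qed

lemma fG_le_card:
  assumes "finite V" "r > 0"
  shows "fG V E d r \<le> card V"
  by (rule fG_le[where c="\<lambda>_. 0"])
     (use assms in \<open>auto simp: edge_colouring_def mono_subgraph_def intro: card_mono\<close>)

lemma f_le_fG: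
  assumes "simple_graph {0..<n} E" "min_degree_ge {0..<n} E k" "r > 0"
  shows "f n k d r \<le> fG {0..<n} E d r"
proof -
  let ?A = "{fG {0..<n} E d r | E. simple_graph {0..<n} E \<and> min_degree_ge {0..<n} E k}"
  have "?A \<subseteq> {..n}"
  proof
    fix x assume "x \<in> ?A"
    then obtain E' where "x = fG {0..<n} E' d r" by blast
    then show "x \<in> {..n}" using fG_le_card[OF _ assms(3), of "{0..<n}" E' d] by simp
  qed
  then have "finite ?A" by (rule finite_subset) simp
  moreover have "fG {0..<n} E d r \<in> ?A" using assms by blast
  ultimately show ?thesis unfolding f_def by (rule Min_le)
qed

lemma complete_graph_min_degree:
  assumes "k < n"
  defines "E \<equiv> {e. e \<subseteq> {0..<n::nat} \<and> card e = 2}"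
  shows "simple_graph {0..<n} E" and "min_degree_ge {0..<n} E k"
proof -
  show "simple_graph {0..<n} E" unfolding simple_graph_def E_def by blast
  have "finite E" unfolding E_def by (rule finite_subset[of _ "Pow {0..<n}"]) auto
  have "k \<le> degree E v" if v: "v \<in> {0..<n}" for v
  proof -
    have "card ({0..<n} - {v}) \<le> degree E v"
      using \<open>finite E\<close> v by (intro card_le_degree) (auto simp: E_def)
    then show ?thesis using v assms(1) by simp
  qed
  then show "min_degree_ge {0..<n} E k" unfolding min_degree_ge_def by blast
qed

lemma f_le_order:
  assumes "k < n" "r > 0"
  shows "f n k d r \<le> n"
proof -
  let ?E = "{e. e \<subseteq> {0..<n} \<and> card e = 2}"
  have "f n k d r \<le> fG {0..<n} ?E d r"
    using complete_graph_min_degree[OF assms(1)] by (rule f_le_fG[OF _ _ assms(2)])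
  also have "\<dots> \<le> card {0..<n}" by (rule fG_le_card[OF _ assms(2)]) simp
  finally show ?thesis by simp
qed

lemma mono_subgraph_subset_by_peeling:
  fixes rank :: "'a \<Rightarrow> nat"
  assumes G: "simple_graph V E"
    and W: "mono_subgraph V E c j W F" "min_degree_ge W F (Suc D)"
    and few: "\<And>v. v \<in> V \<Longrightarrow> v \<notin> S \<Longrightarrow>
        card {u\<in>V. {u,v} \<in> E \<and> c {u,v} = j \<and> (u \<in> S \<or> rank v \<le> rank u) \<and> u \<noteq> v} \<le> D"
  shows "W \<subseteq> S"
proof (rule ccontr)
  assume "\<not> W \<subseteq> S"
  then obtain w where "w \<in> W - S" by blast
  then obtain v where v: "v \<in> W - S" and least: "\<forall>x. x \<in> W - S \<longrightarrow> rank v \<le> rank x"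
    using ex_has_least_nat[of "\<lambda>x. x \<in> W - S" w rank] by blast
  \<comment> \<open>the neighbours of \<open>v\<close> in \<open>F\<close> lie in \<open>S\<close> or have rank at least \<open>rank v\<close>\<close>
  have WV: "W \<subseteq> V" and FE: "F \<subseteq> E" and F: "\<forall>e\<in>F. e \<subseteq> W \<and> c e = j"
    using W(1) unfolding mono_subgraph_def by blast+
  define N where "N = {u\<in>V. {u,v} \<in> E \<and> c {u,v} = j \<and> (u \<in> S \<or> rank v \<le> rank u) \<and> u \<noteq> v}"
  have "{e\<in>F. v \<in> e} \<subseteq> (\<lambda>u. {u,v}) ` N"
  proof
    fix e assume e: "e \<in> {e\<in>F. v \<in> e}"
    have "card e = 2" using e G FE unfolding simple_graph_def by blast
    moreover have "v \<in> e" using e by simp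
    ultimately obtain u where u: "e = {u,v}" "u \<noteq> v" by (metis card_2_other_element)
    have "e \<subseteq> W" "c e = j" "e \<in> E" using F FE e by auto
    then have "u \<in> W" "u \<in> V" using u WV by auto
    moreover have "u \<in> S \<or> rank v \<le> rank u" using least \<open>u \<in> W\<close> by blast
    ultimately have "u \<in> N" unfolding N_def using u \<open>c e = j\<close> \<open>e \<in> E\<close> by blast
    then show "e \<in> (\<lambda>u. {u,v}) ` N" using u by blast
  qed
  moreover have "finite N" using G unfolding N_def simple_graph_def by auto
  ultimately have "degree F v \<le> card ((\<lambda>u. {u,v}) ` N)"
    unfolding degree_def by (intro card_mono) auto
  also have "\<dots> \<le> card N" using \<open>finite N\<close> by (rule card_image_le)
  also have "\<dots> \<le> D" using few v WV unfolding N_def by blast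
  finally show False using W(2) v unfolding min_degree_ge_def by fastforce
qed

section \<open>The construction\<close>

text \<open>
  The part \<open>B\<close> is \<open>{0..<NB}\<close>, cut into \<open>U\<close> blocks of
  \<open>q = r(r - 1)D\<close> consecutive vertices; a vertex \<open>u\<close> of \<open>B\<close> lies in group
  \<open>(u mod q) div D = (r - 1) i + j'\<close> of its block, with \<open>j' < r - 1\<close>. The core vertex
  \<open>NB + y\<close> has class \<open>y mod r\<close>, and for \<open>y < X = rpU\<close> it belongs to block \<open>y div rp\<close>.
  \<^item> \<open>t < t'\<close> in \<open>B\<close> are adjacent if \<open>t' - t \<le> R = rD\<close>, in colour \<open>(t' - t - 1) div D\<close>;
  \<^item> \<open>u\<close> in \<open>B\<close> is adjacent to the \<open>p\<close> core vertices \<open>NB + y\<close>, \<open>y < X\<close>, of its block and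
    of class \<open>i\<close>, in the \<open>j'\<close>-th colour different from \<open>i\<close>;
  \<^item> the first and the last \<open>R\<close> vertices of \<open>B\<close>, which lack backward or forward
    neighbours, get \<open>R\<close> private core vertices each from \<open>NB + X ..< NB + X + 2R\<^sup>2\<close>, in a
    colour different from the class;
  \<^item> core vertices of the same class \<open>i\<close> are adjacent, in colour \<open>i\<close>.

  Besides \<open>B\<close> and
  the \<open>X + 2R\<^sup>2\<close> core vertices above, \<open>n_large\<close> leaves room for \<open>r(K + 1)\<close> more core
  vertices, so that every class is a clique on at least \<open>K + 1\<close> vertices.
\<close>

locale extremal_graph =
  fixes r D p U n :: nat
  assumes r_ge_2: "2 \<le> r" and p_pos: "1 \<le> p" and U_ge_2: "2 \<le> U"
    and n_large: "(r*(r-1)*D + r*p)*U + 2*(r*D)*(r*D) + r*(2*r*D + p + 1) \<le> n"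
begin

definition "q = r*(r-1)*D"
definition "NB = q*U"
definition "X = r*p*U"
definition "R = r*D"
definition "K = 2*r*D + p"
definition "boundary_vertex l = (if l < R then l else NB - 2*R + l)"

definition adj :: "nat \<Rightarrow> nat \<Rightarrow> bool" where
  "adj u v \<longleftrightarrow>
    (v < NB \<and> v - u \<le> R) \<or>
    (u < NB \<and> NB \<le> v \<and>
      ((v - NB < X \<and> (v - NB) div (r*p) = u div q \<and> (v - NB) mod r = (u mod q) div D div (r-1)) \<or>
       (X \<le> v - NB \<and> v - NB < X + 2*R*R \<and> boundary_vertex ((v - NB - X) div R) = u))) \<or>
    (NB \<le> u \<and> (u - NB) mod r = (v - NB) mod r)"

definition other_colour :: "nat \<Rightarrow> nat \<Rightarrow> nat" where
  "other_colour i j = (if j < i then j else Suc j)"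

definition col :: "nat \<Rightarrow> nat \<Rightarrow> nat" where
  "col u v =
    (if v < NB then (v - u - 1) div D
     else if u < NB then
       (if v - NB < X then other_colour ((v - NB) mod r) ((u mod q) div D mod (r-1))
        else if (v - NB) mod r = 0 then 1 else 0)
     else (u - NB) mod r)"

definition "edges = {e. \<exists>u v. e = {u,v} \<and> u < v \<and> v < n \<and> adj u v}"
definition "colour e = col (Min e) (Max e)"
definition "class j = {v. NB \<le> v \<and> v < n \<and> (v - NB) mod r = j}"
definition "rank v = (if v < NB then Suc v else (0::nat))"

abbreviation "peel_nbrs j v \<equiv>
  {u\<in>{0..<n}. {u,v} \<in> edges \<and> colour {u,v} = j \<and> (u \<in> class j \<or> rank v \<le> rank u) \<and> u \<noteq> v}"

lemma r_pos: "r > 0"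
  using r_ge_2 by simp

lemma parts_fit: "NB + X + 2*R*R + r*(K+1) \<le> n"
proof -
  have "(r*(r-1)*D + r*p)*U = NB + X" unfolding NB_def X_def q_def by (simp add: algebra_simps)
  then show ?thesis using n_large unfolding K_def R_def by simp
qed

lemma NB_ge: "2*R \<le> NB"
proof -
  have "r*D*1 \<le> r*D*(r-1)" using r_ge_2 by (intro mult_le_mono2) simp
  then have "2*R \<le> q*2" unfolding R_def q_def by (simp add: algebra_simps)
  also have "\<dots> \<le> q*U" using U_ge_2 by (intro mult_le_mono2)
  finally show ?thesis unfolding NB_def .
qed

lemma D_pos: "NB > 0 \<Longrightarrow> D > 0"
  unfolding NB_def q_def by auto

lemma in_edges_iff: "{a,b} \<in> edges \<longleftrightarrow> (a < b \<and> b < n \<and> adj a b) \<or> (b < a \<and> a < n \<and> adj b a)"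
  unfolding edges_def by (auto simp: doubleton_eq_iff)

lemma colour_eq: "a < b \<Longrightarrow> colour {a,b} = col a b" "b < a \<Longrightarrow> colour {a,b} = col b a"
  unfolding colour_def by (auto simp: min_def max_def)

lemma finite_edges: "finite edges"
  by (rule finite_subset[of _ "Pow {0..<n}"]) (auto simp: edges_def)

lemma simple_graph_edges: "simple_graph {0..<n} edges"
  unfolding simple_graph_def edges_def by fastforce

lemma edge_colouring: "edge_colouring edges r colour"
  unfolding edge_colouring_def
proof
  fix e assume "e \<in> edges"
  then obtain u v where e: "e = {u,v}" "u < v" "adj u v" unfolding edges_def by blast
  have "col u v < r"
  proof (cases "v < NB")
    case True
    then have "v - u \<le> r * D" using e unfolding adj_def R_def by auto
    then have "v - u - 1 < r * D" using e(2) by linarith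
    then show ?thesis using True unfolding col_def by (simp add: less_mult_imp_div_less)
  next
    case False
    have "(u mod q) div D mod (r-1) < r - 1" using r_ge_2 by simp
    then have "other_colour i ((u mod q) div D mod (r-1)) < r" for i
      unfolding other_colour_def by auto
    then show ?thesis using False r_ge_2 unfolding col_def by auto
  qed
  then show "colour e < r" using e colour_eq by simp
qed

subsection \<open>Minimum degree\<close>

lemma adj_B_B: "u < v \<Longrightarrow> v < NB \<Longrightarrow> v - u \<le> R \<Longrightarrow> adj u v"
  unfolding adj_def by blast

lemma adj_core_core: "NB \<le> u \<Longrightarrow> (u - NB) mod r = (v - NB) mod r \<Longrightarrow> adj u v"
  unfolding adj_def by blast

lemma edge_if_adj: "u < v \<Longrightarrow> v < n \<Longrightarrow> adj u v \<Longrightarrow> {u,v} \<in> edges \<and> {v,u} \<in> edges"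
  unfolding in_edges_iff by simp

lemma core_degree:
  assumes x: "NB \<le> x" "x < n"
  shows "K \<le> degree edges x"
proof -
  define i where "i = (x - NB) mod r"
  define A where "A = (\<lambda>m. NB + i + r*m) ` {..K} - {x}"
  have "inj_on (\<lambda>m. NB + i + r*m) {..K}" unfolding inj_on_def using r_pos by simp
  then have "card ((\<lambda>m. NB + i + r*m) ` {..K}) = K + 1" by (simp add: card_image)
  then have "K \<le> card A"
    unfolding A_def using diff_card_le_card_Diff[of "{x}" "(\<lambda>m. NB + i + r*m) ` {..K}"] by simp
  moreover have "\<forall>a\<in>A. {a,x} \<in> edges \<and> a \<noteq> x"
  proof
    fix a assume "a \<in> A"
    then obtain m where m: "m \<le> K" "a = NB + i + r*m" "a \<noteq> x" unfolding A_def by blast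
    have "i < r" unfolding i_def using r_pos by simp
    moreover have "r*m \<le> r*K" using m(1) by simp
    moreover have "r*(K+1) = r + r*K" by simp
    ultimately have "i + r*m < r*(K+1)" by linarith
    then have "a < n" using parts_fit m(2) by simp
    have same_class: "(a - NB) mod r = (x - NB) mod r" using m(2) \<open>i < r\<close> unfolding i_def by simp
    have "NB \<le> a" using m(2) by simp
    show "{a,x} \<in> edges \<and> a \<noteq> x"
    proof (cases "a < x")
      case True
      then have "{a,x} \<in> edges"
        using edge_if_adj adj_core_core[OF \<open>NB \<le> a\<close> same_class] x(2) by blast
      then show ?thesis using True by simp
    next
      case False
      then have "x < a" using m(3) by simp
      then have "{a,x} \<in> edges"
        using edge_if_adj adj_core_core[OF x(1) same_class[symmetric]] \<open>a < n\<close> by blast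
      then show ?thesis using m(3) by simp
    qed
  qed
  moreover have "finite A" unfolding A_def by simp
  ultimately show ?thesis using card_le_degree[OF finite_edges, of A x] by linarith
qed

lemma core_nbrs_of_B:
  assumes t: "t < NB"
  obtains A where "card A = p" "A \<subseteq> {NB..<NB+X}" "\<forall>u\<in>A. {u,t} \<in> edges \<and> u \<noteq> t"
proof -
  have "D > 0" using D_pos t by simp
  have "q > 0" using t unfolding NB_def by (cases "q = 0") auto
  define b where "b = t div q"
  define i where "i = (t mod q) div D div (r-1)"
  have b: "b < U" unfolding b_def using t unfolding NB_def
    by (simp add: less_mult_imp_div_less mult.commute)
  have i: "i < r"
  proof -
    have "t mod q < (r*(r-1))*D" using \<open>q > 0\<close> unfolding q_def by simp
    then have "(t mod q) div D < r*(r-1)" by (simp add: less_mult_imp_div_less)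
    then show ?thesis unfolding i_def using r_ge_2 by (simp add: less_mult_imp_div_less)
  qed
  define h where "h = (\<lambda>\<beta>. NB + (r*p*b + r*\<beta> + i))"
  have "inj_on h {..<p}" unfolding h_def inj_on_def using r_pos by simp
  then have "card (h ` {..<p}) = p" by (simp add: card_image)
  moreover have "h \<beta> \<in> {NB..<NB+X} \<and> {h \<beta>, t} \<in> edges \<and> h \<beta> \<noteq> t" if "\<beta> < p" for \<beta>
  proof -
    define y where "y = r*p*b + r*\<beta> + i"
    have "r*(\<beta>+1) \<le> r*p" using that by (intro mult_le_mono2) simp
    then have lt: "r*\<beta> + i < r*p" using i by (simp add: algebra_simps)
    have "r*p*(b+1) \<le> r*p*U" using b by (intro mult_le_mono2) simp
    then have "y < X" unfolding y_def X_def using lt by (simp add: algebra_simps)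
    moreover have "y = (r*\<beta> + i) + (r*p)*b" unfolding y_def by simp
    then have "y div (r*p) = b" using div_mult_self2[of "r*p" "r*\<beta> + i" b] lt r_pos p_pos by simp
    moreover have "y = r*(p*b + \<beta>) + i" unfolding y_def by (simp add: algebra_simps)
    then have "y mod r = i" using i by simp
    ultimately have "adj t (NB + y)" using t unfolding adj_def b_def i_def by simp
    moreover have "NB + y < n" using parts_fit \<open>y < X\<close> by simp
    ultimately show ?thesis using edge_if_adj[of t "NB + y"] t \<open>y < X\<close> unfolding h_def y_def by simp
  qed
  ultimately show ?thesis using that[of "h ` {..<p}"] by blast
qed

lemma private_nbrs_of_boundary:
  assumes t: "t < NB" and boundary: "t < R \<or> NB \<le> t + R"
  obtains A where "card A = R" "A \<subseteq> {NB+X..<n}" "\<forall>u\<in>A. {u,t} \<in> edges \<and> u \<noteq> t"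
proof -
  define l where "l = (if t < R then t else t + 2*R - NB)"
  have "R > 0" unfolding R_def using D_pos t r_pos by simp
  have l: "l < 2*R" unfolding l_def using t \<open>R > 0\<close> by auto
  have "boundary_vertex l = t" unfolding l_def boundary_vertex_def using t boundary NB_ge by auto
  have nbr: "u \<in> {NB+X..<n} \<and> {u,t} \<in> edges \<and> u \<noteq> t" if u: "u \<in> {NB+X+l*R ..< NB+X+l*R+R}" for u
  proof -
    define w where "w = u - (NB+X+l*R)"
    have w: "w < R" "u = NB + (X + (l*R + w))" using u unfolding w_def by auto
    have "(l+1)*R \<le> (2*R)*R" using l by (intro mult_le_mono1) simp
    then have "l*R + w < 2*R*R" using w(1) by (simp add: algebra_simps)
    moreover have "(l*R + w) div R = l" using w(1) by simp
    ultimately have "adj t u" using t w(2) \<open>boundary_vertex l = t\<close> unfolding adj_def by simp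
    moreover have "u < n" using parts_fit w(2) \<open>l*R + w < 2*R*R\<close> by simp
    ultimately show ?thesis using edge_if_adj[of t u] t w(2) by simp
  qed
  show ?thesis
    by (rule that[of "{NB+X+l*R ..< NB+X+l*R+R}"]) (use nbr in \<open>simp, blast+\<close>)
qed

lemma B_nbrs_of_B:
  assumes t: "t < NB"
  shows "\<forall>u\<in>{t-R..<t}. {u,t} \<in> edges \<and> u \<noteq> t"
    and "t + R < NB \<Longrightarrow> \<forall>u\<in>{t<..t+R}. {u,t} \<in> edges \<and> u \<noteq> t"
proof -
  have "NB \<le> n" using parts_fit by simp
  show "\<forall>u\<in>{t-R..<t}. {u,t} \<in> edges \<and> u \<noteq> t"
  proof
    fix u assume "u \<in> {t-R..<t}"
    then have "u < t" "adj u t" using t by (auto intro: adj_B_B)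
    then show "{u,t} \<in> edges \<and> u \<noteq> t" using edge_if_adj[of u t] t \<open>NB \<le> n\<close> by simp
  qed
  show "\<forall>u\<in>{t<..t+R}. {u,t} \<in> edges \<and> u \<noteq> t" if "t + R < NB"
  proof
    fix u assume "u \<in> {t<..t+R}"
    then have "t < u" "u < NB" "adj t u" using that by (auto intro: adj_B_B)
    then show "{u,t} \<in> edges \<and> u \<noteq> t" using edge_if_adj[of t u] \<open>NB \<le> n\<close> by simp
  qed
qed

text \<open>Near the ends of \<open>B\<close>, private core vertices stand in for the missing neighbours at
  distance at most \<open>R\<close>.\<close>

lemma two_R_nbrs_of_B:
  assumes t: "t < NB"
  obtains L L' where "card L = R" "card L' = R" "L \<inter> L' = {}"
    "L \<union> L' \<subseteq> {..<NB} \<union> {NB+X..<n}" "\<forall>u\<in>L \<union> L'. {u,t} \<in> edges \<and> u \<noteq> t"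
proof -
  consider "t < R" | "R \<le> t" "t + R < NB" | "NB \<le> t + R" by linarith
  then show ?thesis
  proof cases
    case 1
    obtain P where P: "card P = R" "P \<subseteq> {NB+X..<n}" "\<forall>u\<in>P. {u,t} \<in> edges \<and> u \<noteq> t"
      using private_nbrs_of_boundary[OF t] 1 by blast
    have "t + R < NB" using 1 NB_ge by simp
    show ?thesis
    proof (rule that[of P "{t<..t+R}"])
      show "P \<inter> {t<..t+R} = {}" "P \<union> {t<..t+R} \<subseteq> {..<NB} \<union> {NB+X..<n}"
        using P(2) \<open>t + R < NB\<close> by auto
      show "\<forall>u\<in>P \<union> {t<..t+R}. {u,t} \<in> edges \<and> u \<noteq> t"
        using P(3) B_nbrs_of_B(2)[OF t \<open>t + R < NB\<close>] by blast
    qed (simp_all add: P(1))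
  next
    case 2
    show ?thesis
    proof (rule that[of "{t-R..<t}" "{t<..t+R}"])
      show "{t-R..<t} \<union> {t<..t+R} \<subseteq> {..<NB} \<union> {NB+X..<n}" using 2 by auto
      show "\<forall>u\<in>{t-R..<t} \<union> {t<..t+R}. {u,t} \<in> edges \<and> u \<noteq> t"
        using B_nbrs_of_B[OF t] 2 by blast
    qed (use 2 in auto)
  next
    case 3
    obtain P where P: "card P = R" "P \<subseteq> {NB+X..<n}" "\<forall>u\<in>P. {u,t} \<in> edges \<and> u \<noteq> t"
      using private_nbrs_of_boundary[OF t] 3 by blast
    have "R \<le> t" using 3 NB_ge by simp
    show ?thesis
    proof (rule that[of "{t-R..<t}" P])
      show "{t-R..<t} \<inter> P = {}" "{t-R..<t} \<union> P \<subseteq> {..<NB} \<union> {NB+X..<n}"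
        using P(2) t by auto
      show "\<forall>u\<in>{t-R..<t} \<union> P. {u,t} \<in> edges \<and> u \<noteq> t"
        using P(3) B_nbrs_of_B(1)[OF t] by blast
    qed (simp_all add: P(1) \<open>R \<le> t\<close>)
  qed
qed

lemma B_degree:
  assumes t: "t < NB"
  shows "K \<le> degree edges t"
proof -
  obtain L L' where L: "card L = R" "card L' = R" "L \<inter> L' = {}"
    "L \<union> L' \<subseteq> {..<NB} \<union> {NB+X..<n}" "\<forall>u\<in>L \<union> L'. {u,t} \<in> edges \<and> u \<noteq> t"
    using two_R_nbrs_of_B[OF t] by blast
  obtain P where P: "card P = p" "P \<subseteq> {NB..<NB+X}" "\<forall>u\<in>P. {u,t} \<in> edges \<and> u \<noteq> t"
    using core_nbrs_of_B[OF t] by blast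
  have fin: "finite L" "finite L'" "finite P" using L(4) P(2) by (auto intro: finite_subset)
  have "(L \<union> L') \<inter> P = {}" using L(4) P(2) by fastforce
  then have "card (L \<union> L' \<union> P) = K"
    using L(1-3) P(1) fin unfolding K_def R_def by (simp add: card_Un_disjoint)
  moreover have "card (L \<union> L' \<union> P) \<le> degree edges t"
    using L(5) P(3) fin by (intro card_le_degree[OF finite_edges]) auto
  ultimately show ?thesis by simp
qed

lemma min_degree: "min_degree_ge {0..<n} edges K"
  unfolding min_degree_ge_def using B_degree core_degree by (metis atLeastLessThan_iff not_less)

subsection \<open>Peeling the colour classes\<close>

lemma card_peel_nbrs_B:
  assumes t: "t < NB"
  shows "card (peel_nbrs j t) \<le> D"
proof -
  have "D > 0" using D_pos t by simp
  \<comment> \<open>no core vertex of class \<open>j\<close> is joined to \<open>B\<close> in colour \<open>j\<close>\<close>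
  have "peel_nbrs j t \<subseteq> {Suc t + D*j ..< Suc t + D*j + D}"
  proof
    fix u
    assume "u \<in> peel_nbrs j t"
    then have u: "colour {u,t} = j" "u \<in> class j \<or> rank t \<le> rank u" "u \<noteq> t" by auto
    show "u \<in> {Suc t + D*j ..< Suc t + D*j + D}"
    proof (cases "u < NB")
      case False
      then have "u \<in> class j" "t < u" using u(2) t unfolding rank_def by auto
      then have "col t u = (u - NB) mod r" using u(1) colour_eq unfolding class_def by simp
      then show ?thesis using t False unfolding col_def other_colour_def by (auto split: if_splits)
    next
      case True
      then have "t < u" using u(2,3) t unfolding rank_def class_def by auto
      then have "(u - t - 1) div D = j" using u(1) True colour_eq unfolding col_def by simp
      then have "u - t - 1 = D * j + (u - t - 1) mod D" by (metis div_mult_mod_eq mult.commute)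
      moreover have "(u - t - 1) mod D < D" using \<open>D > 0\<close> by simp
      ultimately show ?thesis using \<open>t < u\<close> unfolding atLeastLessThan_iff by linarith
    qed
  qed
  then show ?thesis using card_mono[of "{Suc t + D*j ..< Suc t + D*j + D}"] by simp
qed

lemma core_edge_colour:
  assumes "NB \<le> u" "NB \<le> x" "{u,x} \<in> edges"
  shows "colour {u,x} = (x - NB) mod r"
proof (cases "u < x")
  case True
  then show ?thesis using assms colour_eq unfolding in_edges_iff col_def adj_def by auto
next
  case False
  then have "x < u" "adj x u" using assms unfolding in_edges_iff by auto
  then show ?thesis using assms colour_eq unfolding col_def adj_def by auto
qed

lemma B_vertex_in_group:
  assumes "u < NB"
  defines "g \<equiv> q * (u div q) + D * ((u mod q) div D)"
  shows "u \<in> {g ..< g + D}"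
proof -
  have "D > 0" using D_pos assms(1) by simp
  have "D dvd q" unfolding q_def by simp
  then have "u mod q = D * ((u mod q) div D) + u mod D"
    by (metis div_mult_mod_eq mod_mod_cancel mult.commute)
  then have "u = g + u mod D" unfolding g_def by (metis add.assoc div_mult_mod_eq mult.commute)
  then show ?thesis using \<open>D > 0\<close> by (metis atLeastLessThan_iff le_add1 mod_less_divisor nat_add_left_cancel_less)
qed

lemma other_colour_eq:
  "i \<noteq> j \<Longrightarrow> other_colour i j' = j \<Longrightarrow> j' = (if j < i then j else j - 1)"
  unfolding other_colour_def by (auto split: if_splits)

lemma adj_B_core:
  "u < NB \<Longrightarrow> NB \<le> v \<Longrightarrow> adj u v \<Longrightarrow>
    (v - NB < X \<and> (v - NB) div (r*p) = u div q \<and> (v - NB) mod r = (u mod q) div D div (r-1)) \<or>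
    (X \<le> v - NB \<and> boundary_vertex ((v - NB - X) div R) = u)"
  unfolding adj_def by auto

lemma peel_nbr_of_core:
  assumes x: "NB \<le> x" and not_in_class: "(x - NB) mod r \<noteq> j" and u: "u \<in> peel_nbrs j x"
  shows "u < NB \<and> adj u x \<and> col u x = j"
proof -
  have "u < NB"
  proof (rule ccontr)
    assume "\<not> u < NB"
    then have "colour {u,x} = (x - NB) mod r" using core_edge_colour[of u x] x u by simp
    then show False using u not_in_class by simp
  qed
  then show ?thesis using u x colour_eq unfolding in_edges_iff by auto
qed

lemma B_nbr_of_core_in_group:
  assumes u: "u < NB" "adj u x" "col u x = j"
    and x: "NB \<le> x" "x - NB < X" and not_in_class: "(x - NB) mod r \<noteq> j"
  defines "i \<equiv> (x - NB) mod r"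
  defines "g \<equiv> q * ((x - NB) div (r*p)) + D * ((r-1)*i + (if j < i then j else j - 1))"
  shows "u \<in> {g ..< g + D}"
proof -
  have block: "(x - NB) div (r*p) = u div q" and "i = (u mod q) div D div (r-1)"
    using adj_B_core[OF u(1) x(1) u(2)] x(2) unfolding i_def by auto
  moreover have "other_colour i ((u mod q) div D mod (r-1)) = j"
    using u(1,3) x unfolding col_def i_def by simp
  then have "(u mod q) div D mod (r-1) = (if j < i then j else j - 1)"
    using other_colour_eq not_in_class unfolding i_def by blast
  ultimately have "(u mod q) div D = (r-1)*i + (if j < i then j else j - 1)"
    by (metis div_mult_mod_eq mult.commute)
  then show ?thesis using B_vertex_in_group[OF u(1)] block unfolding g_def by simp
qed

lemma card_peel_nbrs_core:
  assumes x: "NB \<le> x" and not_in_class: "(x - NB) mod r \<noteq> j"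
  shows "card (peel_nbrs j x) \<le> D"
proof (cases "x - NB < X")
  case True
  obtain g where "peel_nbrs j x \<subseteq> {g ..< g + D}"
    using B_nbr_of_core_in_group[OF _ _ _ x True not_in_class] peel_nbr_of_core[OF x not_in_class]
    by (metis (no_types, lifting) subsetI)
  then show ?thesis using card_mono[of "{g ..< g + D}"] by simp
next
  case False
  have "peel_nbrs j x \<subseteq> {boundary_vertex ((x - NB - X) div R)}"
  proof
    fix u assume "u \<in> peel_nbrs j x"
    then have "u < NB" "adj u x" using peel_nbr_of_core[OF x not_in_class] by auto
    then show "u \<in> {boundary_vertex ((x - NB - X) div R)}" using adj_B_core[of u x] False x by auto
  qed
  then have "card (peel_nbrs j x) \<le> 1"
    using card_mono[of "{boundary_vertex ((x - NB - X) div R)}"] by simp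
  show ?thesis
  proof (cases "peel_nbrs j x = {}")
    case False
    then obtain u where "u \<in> peel_nbrs j x" by blast
    then have "D > 0" using peel_nbr_of_core[OF x not_in_class, of u] D_pos by simp
    then show ?thesis using \<open>card (peel_nbrs j x) \<le> 1\<close> by linarith
  qed (simp only: card.empty zero_le)
qed

lemma card_class: "card (class j) \<le> (n - NB) div r + 1"
proof -
  have "class j \<subseteq> (\<lambda>m. NB + j + r*m) ` {..(n - NB) div r}"
  proof
    fix v assume "v \<in> class j"
    then have v: "NB \<le> v" "v < n" "(v - NB) mod r = j" unfolding class_def by auto
    then have "v = NB + j + r * ((v - NB) div r)" by (metis add.assoc div_mult_mod_eq le_add_diff_inverse mult.commute add.commute)
    moreover have "(v - NB) div r \<le> (n - NB) div r" using v by (intro div_le_mono) simp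
    ultimately show "v \<in> (\<lambda>m. NB + j + r*m) ` {..(n - NB) div r}" by blast
  qed
  then have "card (class j) \<le> card ((\<lambda>m. NB + j + r*m) ` {..(n - NB) div r})" by (intro card_mono) auto
  also have "\<dots> \<le> (n - NB) div r + 1" using card_image_le[of "{..(n - NB) div r}"] by simp
  finally show ?thesis .
qed

lemma fG_le_class_size: "fG {0..<n} edges (Suc D) r \<le> (n - NB) div r + 1"
proof (rule fG_le[OF edge_colouring])
  fix j W F assume W: "mono_subgraph {0..<n} edges colour j W F" "min_degree_ge W F (Suc D)"
  have "W \<subseteq> class j"
  proof (rule mono_subgraph_subset_by_peeling[OF simple_graph_edges W])
    fix v assume v: "v \<in> {0..<n}" "v \<notin> class j"
    show "card (peel_nbrs j v) \<le> D"
    proof (cases "v < NB")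
      case True
      then show ?thesis by (rule card_peel_nbrs_B)
    next
      case False
      moreover have "(v - NB) mod r \<noteq> j" using False v unfolding class_def by auto
      ultimately show ?thesis by (intro card_peel_nbrs_core) auto
    qed
  qed
  then have "card W \<le> card (class j)" by (intro card_mono) (auto simp: class_def)
  then show "card W \<le> (n - NB) div r + 1" using card_class[of j] by simp
qed

lemma f_le_class_size: "f n (2*r*D + p) (Suc D) r \<le> (n - r*(r-1)*D*U) div r + 1"
  using le_trans[OF f_le_fG[OF simple_graph_edges min_degree r_pos] fG_le_class_size]
  unfolding K_def NB_def q_def .

end

section \<open>The asymptotic bound\<close>

lemma f_le_affine:
  fixes r D p n U :: nat
  assumes r: "2 \<le> r" and p: "1 \<le> p" and U: "2 \<le> U"
  defines "m \<equiv> r*(r-1)*D + r*p" and "C \<equiv> 2*(r*D)*(r*D) + r*(2*r*D + p + 1)"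
  assumes n: "C + m*U \<le> n" "n < C + m*U + m"
  shows "f n (2*r*D + p) (Suc D) r \<le> p*U + m + C"
proof -
  interpret extremal_graph r D p U n
    by unfold_locales (use r p U n in \<open>auto simp: m_def C_def\<close>)
  have "m*U = r*(r-1)*D*U + r*p*U" unfolding m_def by (simp add: algebra_simps)
  moreover have "0 < m" unfolding m_def using r p by simp
  ultimately have "n - r*(r-1)*D*U < r*p*U + m + C" using n(2) by linarith
  moreover have "m \<le> r*m" "C \<le> r*C" using r by simp_all
  moreover have "(p*U + m + C) * r = r*p*U + r*m + r*C" by (simp add: algebra_simps)
  ultimately have "n - r*(r-1)*D*U < (p*U + m + C) * r" by linarith
  then have "(n - r*(r-1)*D*U) div r < p*U + m + C" by (rule less_mult_imp_div_less)
  then show ?thesis using f_le_class_size by simp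
qed

lemma f_le_linear:
  fixes r D p n :: nat
  assumes r: "2 \<le> r" and p: "1 \<le> p"
  defines "m \<equiv> r*(r-1)*D + r*p" and "C \<equiv> 2*(r*D)*(r*D) + r*(2*r*D + p + 1)"
  assumes n: "C + 2*m \<le> n"
  shows "real (f n (2*r*D + p) (Suc D) r) \<le> real n * real p / real m + real (m + C)"
proof -
  have "0 < m" unfolding m_def using r p by simp
  define U where "U = (n - C) div m"
  have "m*U + (n - C) mod m = n - C" unfolding U_def by (rule mult_div_mod_eq)
  moreover have "(n - C) mod m < m" using \<open>0 < m\<close> by simp
  ultimately have U: "C + m*U \<le> n" "n < C + m*U + m" using n by linarith+
  have "2*m div m \<le> U" unfolding U_def using n by (intro div_le_mono) simp
  then have "2 \<le> U" using \<open>0 < m\<close> by simp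
  then have "f n (2*r*D + p) (Suc D) r \<le> p*U + m + C"
    unfolding m_def C_def by (rule f_le_affine[OF r p _ U[unfolded m_def C_def]])
  then have "real (f n (2*r*D + p) (Suc D) r) \<le> real (p*U) + real (m + C)"
    by (simp only: of_nat_le_iff flip: of_nat_add add.assoc)
  moreover have "real (p*U) \<le> real n * real p / real m"
  proof -
    have "p*U*m \<le> n*p" using U(1) by (simp add: algebra_simps)
    then have "real (p*U*m) \<le> real (n*p)" by (simp only: of_nat_le_iff)
    then have "real (p*U) * real m \<le> real n * real p" by simp
    then show ?thesis using \<open>0 < m\<close> by (simp add: pos_le_divide_eq)
  qed
  ultimately show ?thesis by linarith
qed

lemma f_le_linear_plus_const:
  fixes r D p :: nat
  assumes r: "2 \<le> r" and p: "1 \<le> p"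
  shows "\<exists>C::real. \<forall>n. 2*r*D + p < n \<longrightarrow>
    real (f n (2*r*D + p) (Suc D) r) \<le> real n * real p / real (r*(r-1)*D + r*p) + C"
proof -
  define m where "m = r*(r-1)*D + r*p"
  define C where "C = 2*(r*D)*(r*D) + r*(2*r*D + p + 1)"
  have "real (f n (2*r*D + p) (Suc D) r) \<le> real n * real p / real m + (real (m + C) + real (C + 2*m))"
    if "2*r*D + p < n" for n
  proof (cases "C + 2*m \<le> n")
    case True
    have "real (f n (2*r*D + p) (Suc D) r) \<le> real n * real p / real m + real (m + C)"
      using True unfolding m_def C_def by (rule f_le_linear[OF r p])
    then show ?thesis using of_nat_0_le_iff[of "C + 2*m"] by linarith
  next
    case False
    moreover have "f n (2*r*D + p) (Suc D) r \<le> n" using f_le_order[OF that] r by simp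
    ultimately have "real (f n (2*r*D + p) (Suc D) r) \<le> real (C + 2*m)" by simp
    moreover have "0 \<le> real n * real p / real m" by simp
    ultimately show ?thesis using of_nat_0_le_iff[of "m + C"] by linarith
  qed
  then show ?thesis unfolding m_def by blast
qed

theorem theorem1p2:
  fixes d r k :: nat
  assumes "d \<ge> 1" and "r \<ge> 2" and "k > 2 * r * (d - 1)"
  shows "\<exists>C::real. \<forall>n::nat. n > k \<longrightarrow>
     real (f n k d r) \<le> real n * (real k - 2 * real r * (real d - 1))
        / (real r * (real k - (real r + 1) * (real d - 1))) + C"
proof -
  define D where "D = d - 1"
  define p where "p = k - 2*r*D"
  have d: "d = Suc D" and k: "k = 2*r*D + p" and "1 \<le> p"
    using assms unfolding D_def p_def by auto
  have num: "real k - 2 * real r * (real d - 1) = real p" unfolding k d by simp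
  have "real (r - 1) = real r - 1" using assms(2) by simp
  then have "real (r*(r-1)*D + r*p) = real r * (real r - 1) * real D + real r * real p"
    by (simp only: of_nat_add of_nat_mult)
  then have den: "real r * (real k - (real r + 1) * (real d - 1)) = real (r*(r-1)*D + r*p)"
    unfolding k d by (simp add: algebra_simps)
  have "\<exists>C::real. \<forall>n. k < n \<longrightarrow> real (f n k d r) \<le> real n * real p / real (r*(r-1)*D + r*p) + C"
    using f_le_linear_plus_const[OF assms(2) \<open>1 \<le> p\<close>, of D] unfolding k d .
  then show ?thesis unfolding num den .
qed

end
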